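(* Let $(A,H,D,J)$ be a finite-dimensional real spectral triple and let $B\subseteq\mathrm{End}_{\mathbb{C}}(H)$ be a unital complex $*$-subalgebra such that $B'=B^\circ$ and $\mathcal{C}\ell_D(A)\subseteq B$. Then the following are equivalent: (a) the Hodge property $\mathcal{C}\ell_D(A)'=\mathcal{C}\ell_D(A)^\circ$ holds; (b) $\mathcal{C}\ell_D(A)'\subseteq B^\circ$; (c) $\mathcal{C}\ell_D(A)=B$.
   Context: A finite-dimensional real spectral triple $(A,H,D,J)$ consists of a finite-dimensional complex Hilbert space $H$, a unital (real or complex) $*$-subalgebra $A\subseteq\mathrm{End}_{\mathbb{C}}(H)$, a selfadjoint operator $D$ on $H$, and an antilinear isometry $J$ with $J^2=\varepsilon1$, $JD=\varepsilon'DJ$ ($\varepsilon,\varepsilon'\in\{\pm1\}$; in the even case also $J\gamma=\varepsilon''\gamma J$ for a grading $\gamma$ commuting with $A$ and anticommuting with $D$), such that $[a,JbJ^{-1}]=0$ and $[[D,a],JbJ^{-1}]=0$ for all $a,b\in A$. For $\xi\in\mathrm{End}_{\mathbb{C}}(H)$, $\xi^\circ=J\xi^*J^{-1}$; for a subset $S$, $S^\circ=\{\xi^\circ:\xi\in S\}$ and $S'=\{\xi\in\mathrm{End}_{\mathbb{C}}(H):[\xi,\eta]=0\ \forall\eta\in S\}$. $\mathcal{C}\ell_D(A)$ is the complex $*$-subalgebra of $\mathrm{End}_{\mathbb{C}}(H)$ generated by $A$ and the operators $a[D,b]$, $a,b\in A$. *)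

theory Defs
  imports "HOL-Analysis.Analysis"
begin

text \<open>H is modelled as complex ^ 'n (standard inner product), End_C(H) as complex matrices.\<close>

definition adj :: "complex^'n^'n \<Rightarrow> complex^'n^'n" where
  "adj M = (\<chi> i j. cnj (M $ j $ i))"

definition cscale :: "complex \<Rightarrow> complex^'n^'n \<Rightarrow> complex^'n^'n" where
  "cscale c M = (\<chi> i j. c * M $ i $ j)"

definition real_star_subalg :: "(complex^'n^'n) set \<Rightarrow> bool" where
  "real_star_subalg A \<longleftrightarrow> mat 1 \<in> A \<and>
     (\<forall>a\<in>A. \<forall>b\<in>A. a + b \<in> A \<and> a ** b \<in> A) \<and>
     (\<forall>a\<in>A. \<forall>r::real. cscale (complex_of_real r) a \<in> A) \<and>
     (\<forall>a\<in>A. adj a \<in> A)"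

definition complex_star_subalg :: "(complex^'n^'n) set \<Rightarrow> bool" where
  "complex_star_subalg A \<longleftrightarrow> mat 1 \<in> A \<and>
     (\<forall>a\<in>A. \<forall>b\<in>A. a + b \<in> A \<and> a ** b \<in> A) \<and>
     (\<forall>a\<in>A. \<forall>c::complex. cscale c a \<in> A) \<and>
     (\<forall>a\<in>A. adj a \<in> A)"

definition antilinear_isometry :: "(complex^'n \<Rightarrow> complex^'n) \<Rightarrow> bool" where
  "antilinear_isometry J \<longleftrightarrow> (\<forall>x y. J (x + y) = J x + J y) \<and>
     (\<forall>c x. J (c *s x) = cnj c *s J x) \<and> (\<forall>x. norm (J x) = norm x)"

text \<open>Matrix of the (linear) operator J M J^{-1}.\<close>
definition conj_by :: "(complex^'n \<Rightarrow> complex^'n) \<Rightarrow> complex^'n^'n \<Rightarrow> complex^'n^'n" where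
  "conj_by J M = (\<chi> i j. (J (M *v inv J (axis j 1))) $ i)"

definition opp :: "(complex^'n \<Rightarrow> complex^'n) \<Rightarrow> complex^'n^'n \<Rightarrow> complex^'n^'n" where
  "opp J M = conj_by J (adj M)"

definition commutant :: "(complex^'n^'n) set \<Rightarrow> (complex^'n^'n) set" where
  "commutant S = {x. \<forall>y\<in>S. x ** y = y ** x}"

definition CliffD :: "complex^'n^'n \<Rightarrow> (complex^'n^'n) set \<Rightarrow> (complex^'n^'n) set" where
  "CliffD D A = \<Inter>{B. complex_star_subalg B \<and>
      A \<union> {a ** (D ** b - b ** D) | a b. a \<in> A \<and> b \<in> A} \<subseteq> B}"

definition real_spectral_triple ::
  "(complex^'n^'n) set \<Rightarrow> complex^'n^'n \<Rightarrow> (complex^'n \<Rightarrow> complex^'n) \<Rightarrow> bool" where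
  "real_spectral_triple A D J \<longleftrightarrow> real_star_subalg A \<and> adj D = D \<and> antilinear_isometry J \<and>
     (\<exists>\<epsilon>::complex. \<epsilon> \<in> {1, -1} \<and> (\<forall>x. J (J x) = \<epsilon> *s x)) \<and>
     (\<exists>\<epsilon>'::complex. \<epsilon>' \<in> {1, -1} \<and> (\<forall>x. J (D *v x) = \<epsilon>' *s (D *v J x))) \<and>
     (\<forall>a\<in>A. \<forall>b\<in>A. a ** conj_by J b = conj_by J b ** a \<and>
        (D ** a - a ** D) ** conj_by J b = conj_by J b ** (D ** a - a ** D))"

end

theory Submission
  imports Defs
begin

text \<open>Everything rests on the finite-dimensional double commutant theorem \<open>C'' = C\<close> for a unital
  complex *-algebra \<open>C\<close> of matrices. Let \<open>P\<close> be the orthogonal projection onto \<open>C\<close> for the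
  Hilbert--Schmidt inner product. Since \<open>C\<close> is closed under adjoints, \<open>P (c X) = c P X\<close> for
  \<open>c \<in> C\<close>; writing \<open>P\<close> in matrix units shows that its coefficient matrices lie in \<open>C'\<close>, so every
  \<open>x \<in> C''\<close> commutes with \<open>P\<close>, and \<open>x = x P 1 = P x \<in> C\<close>.
  Given this, \<open>C \<subseteq> B\<close> yields \<open>B' \<subseteq> C'\<close>, and each of (a), (b), (c) amounts to \<open>C' = B'\<close>.\<close>

definition orth_proj :: "'a::euclidean_space set \<Rightarrow> 'a \<Rightarrow> 'a" where
  "orth_proj S x = (SOME y. y \<in> S \<and> (\<forall>w\<in>S. inner (x - y) w = 0))"

context
  fixes S :: "'a::euclidean_space set"
  assumes S: "subspace S"
begin

lemma orth_proj_exists: "\<exists>y. y \<in> S \<and> (\<forall>w\<in>S. inner (x - y) w = 0)"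
proof -
  have span: "span S = S" using S by (simp add: span_eq_iff)
  obtain y z where "y \<in> span S" "\<And>w. w \<in> span S \<Longrightarrow> orthogonal z w" "x = y + z"
    using orthogonal_subspace_decomp_exists[of S x] by blast
  then have "y \<in> S" "\<forall>w\<in>S. inner (x - y) w = 0"
    unfolding span orthogonal_def by simp_all
  then show ?thesis by blast
qed

lemma orth_proj_in: "orth_proj S x \<in> S"
  and orth_proj_orthogonal: "w \<in> S \<Longrightarrow> inner (x - orth_proj S x) w = 0"
  using someI_ex[OF orth_proj_exists[of x]] unfolding orth_proj_def by auto

lemma orth_proj_unique:
  assumes "y \<in> S" "\<And>w. w \<in> S \<Longrightarrow> inner (x - y) w = 0"
  shows "orth_proj S x = y"
proof -
  let ?d = "orth_proj S x - y"
  have d: "?d \<in> S" using subspace_diff[OF S orth_proj_in assms(1)] .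
  have "inner ?d ?d = inner (x - y) ?d - inner (x - orth_proj S x) ?d"
    by (simp add: inner_diff_left)
  also have "\<dots> = 0" using assms(2)[OF d] orth_proj_orthogonal[OF d] by simp
  finally show ?thesis by (simp add: inner_eq_zero_iff)
qed

lemma orth_proj_id: "y \<in> S \<Longrightarrow> orth_proj S y = y"
  by (rule orth_proj_unique) simp_all

lemma inner_orth_proj: "w \<in> S \<Longrightarrow> inner (orth_proj S x) w = inner x w"
  using orth_proj_orthogonal[of w x] by (simp add: inner_diff_left)

lemma linear_orth_proj: "linear (orth_proj S)"
proof
  fix x y
  show "orth_proj S (x + y) = orth_proj S x + orth_proj S y"
    by (rule orth_proj_unique)
      (simp_all add: subspace_add[OF S] orth_proj_in inner_diff_left inner_add_left inner_orth_proj)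
next
  fix r x
  show "orth_proj S (r *\<^sub>R x) = r *\<^sub>R orth_proj S x"
    by (rule orth_proj_unique)
      (simp_all add: subspace_scale[OF S] orth_proj_in inner_diff_left inner_orth_proj)
qed

end

lemma inner_matrix:
  "inner (X::complex^'m::finite^'n::finite) Y = (\<Sum>i\<in>UNIV. \<Sum>j\<in>UNIV. Re (X$i$j * cnj (Y$i$j)))"
  by (simp add: inner_vec_def inner_complex_def)

lemma inner_matrix_mult_left: "inner ((c::complex^'n::finite^'n) ** Y) Z = inner Y (adj c ** Z)"
proof -
  have "inner (c ** Y) Z = (\<Sum>i\<in>UNIV. \<Sum>j\<in>UNIV. \<Sum>m\<in>UNIV. Re (c$i$m * Y$m$j * cnj (Z$i$j)))"
    unfolding inner_matrix
    by (intro sum.cong refl) (simp add: matrix_matrix_mult_def sum_distrib_right Re_sum)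
  also have "\<dots> = (\<Sum>m\<in>UNIV. \<Sum>j\<in>UNIV. \<Sum>i\<in>UNIV. Re (c$i$m * Y$m$j * cnj (Z$i$j)))"
    by (subst sum.swap, subst (2) sum.swap, subst sum.swap) (rule refl)
  also have "\<dots> = inner Y (adj c ** Z)"
    unfolding inner_matrix
    by (intro sum.cong refl) (simp add: matrix_matrix_mult_def adj_def sum_distrib_left mult_ac Re_sum)
  finally show ?thesis .
qed

definition matrix_unit :: "'n::finite \<Rightarrow> 'n \<Rightarrow> complex^'n^'n" where
  "matrix_unit l k = (\<chi> a b. if a = l \<and> b = k then 1 else 0)"

lemma cscale_matrix_unit_component:
  "cscale c (matrix_unit l k) $ i $ j = (if i = l \<and> j = k then c else 0)"
  by (simp add: cscale_def matrix_unit_def)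

lemma matrix_eq_sum_matrix_units:
  "(X::complex^'n::finite^'n) = (\<Sum>l\<in>UNIV. \<Sum>k\<in>UNIV. cscale (X$l$k) (matrix_unit l k))"
proof -
  have "(\<Sum>k\<in>UNIV. if i = l \<and> j = k then X$l$k else 0) = (if i = l then X$l$j else 0)" for i j l
    by (cases "i = l") simp_all
  then show ?thesis
    by (simp add: vec_eq_iff sum_component cscale_matrix_unit_component)
qed

lemma matrix_mult_matrix_unit_component:
  "((c::complex^'n::finite^'n) ** matrix_unit l k) $ i $ j = (if j = k then c$i$l else 0)"
  by (simp add: matrix_matrix_mult_def matrix_unit_def if_distrib if_distribR cong: if_cong)

lemma cscale_eq_mult: "cscale z W = cscale z (mat 1) ** (W::complex^'n::finite^'n)"
  by (simp add: cscale_def matrix_matrix_mult_def mat_def vec_eq_iff if_distrib if_distribR cong: if_cong)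

lemma scaleR_eq_cscale: "r *\<^sub>R W = cscale (complex_of_real r) (W::complex^'n::finite^'n)"
  by (simp only: vec_eq_iff vector_scaleR_component cscale_def vec_lambda_beta)
    (simp add: scaleR_conv_of_real)

definition proj_coeff :: "(complex^'n::finite^'n) set \<Rightarrow> 'n \<Rightarrow> 'n \<Rightarrow> complex^'n^'n" where
  "proj_coeff C j k = (\<chi> i l. orth_proj C (matrix_unit l k) $ i $ j)"

context
  fixes C :: "(complex^'n::finite^'n) set"
  assumes C: "complex_star_subalg C"
begin

lemma star_subalg_one: "mat 1 \<in> C"
  and star_subalg_add: "a \<in> C \<Longrightarrow> b \<in> C \<Longrightarrow> a + b \<in> C"
  and star_subalg_mult: "a \<in> C \<Longrightarrow> b \<in> C \<Longrightarrow> a ** b \<in> C"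
  and star_subalg_cscale: "a \<in> C \<Longrightarrow> cscale z a \<in> C"
  and star_subalg_adj: "a \<in> C \<Longrightarrow> adj a \<in> C"
  using C unfolding complex_star_subalg_def by auto

lemma complex_star_subalg_subspace: "subspace C"
proof -
  have "cscale 0 (mat 1) = (0::complex^'n^'n)" by (simp add: cscale_def vec_eq_iff)
  then have "0 \<in> C" using star_subalg_cscale[OF star_subalg_one, of 0] by simp
  then show ?thesis
    unfolding subspace_def by (simp add: scaleR_eq_cscale star_subalg_add star_subalg_cscale)
qed

lemma orth_proj_mult_left:
  assumes c: "c \<in> C"
  shows "orth_proj C (c ** Y) = c ** orth_proj C Y"
proof (rule orth_proj_unique[OF complex_star_subalg_subspace])
  show "c ** orth_proj C Y \<in> C"
    by (rule star_subalg_mult[OF c orth_proj_in[OF complex_star_subalg_subspace]])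
  fix w assume "w \<in> C"
  then have "inner (Y - orth_proj C Y) (adj c ** w) = 0"
    by (intro orth_proj_orthogonal complex_star_subalg_subspace star_subalg_mult star_subalg_adj c)
  moreover have "c ** Y - c ** orth_proj C Y = c ** (Y - orth_proj C Y)"
    by (simp add: vec_eq_iff matrix_matrix_mult_def right_diff_distrib sum_subtractf)
  ultimately show "inner (c ** Y - c ** orth_proj C Y) w = 0"
    by (simp only: inner_matrix_mult_left)
qed

lemma orth_proj_cscale: "orth_proj C (cscale z X) = cscale z (orth_proj C X)"
proof -
  have "orth_proj C (cscale z (mat 1) ** X) = cscale z (mat 1) ** orth_proj C X"
    by (intro orth_proj_mult_left star_subalg_cscale star_subalg_one)
  then show ?thesis by (simp only: cscale_eq_mult[symmetric])
qed

lemma orth_proj_eq_sum_matrix_units: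
  "orth_proj C X = (\<Sum>l\<in>UNIV. \<Sum>k\<in>UNIV. cscale (X$l$k) (orth_proj C (matrix_unit l k)))"
  using linear_orth_proj[OF complex_star_subalg_subspace]
  by (subst matrix_eq_sum_matrix_units) (simp add: linear_sum orth_proj_cscale)

lemma orth_proj_component_sum:
  "orth_proj C X $ i $ j = (\<Sum>l\<in>UNIV. \<Sum>k\<in>UNIV. X$l$k * orth_proj C (matrix_unit l k) $ i $ j)"
  by (subst orth_proj_eq_sum_matrix_units) (simp add: sum_component cscale_def)

lemma orth_proj_component:
  "orth_proj C X $ i $ j = (\<Sum>k\<in>UNIV. (proj_coeff C j k ** X) $ i $ k)"
  by (subst orth_proj_component_sum, subst sum.swap)
    (simp add: proj_coeff_def matrix_matrix_mult_def mult.commute)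

lemma proj_coeff_commute:
  assumes c: "c \<in> C"
  shows "proj_coeff C j k ** c = c ** proj_coeff C j k"
proof -
  have "(c ** proj_coeff C j k) $ i $ l = (proj_coeff C j k ** c) $ i $ l" for i l
  proof -
    have "(c ** proj_coeff C j k) $ i $ l = (c ** orth_proj C (matrix_unit l k)) $ i $ j"
      by (simp add: proj_coeff_def matrix_matrix_mult_def)
    also have "\<dots> = orth_proj C (c ** matrix_unit l k) $ i $ j"
      by (simp add: orth_proj_mult_left[OF c])
    also have "\<dots> = (\<Sum>l'\<in>UNIV. c$l'$l * orth_proj C (matrix_unit l' k) $ i $ j)"
      by (subst orth_proj_component_sum)
        (simp add: matrix_mult_matrix_unit_component if_distrib[of "\<lambda>a. a * _"] cong: if_cong)
    also have "\<dots> = (proj_coeff C j k ** c) $ i $ l"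
      by (simp add: proj_coeff_def matrix_matrix_mult_def mult.commute)
    finally show ?thesis .
  qed
  then show ?thesis by (simp add: vec_eq_iff)
qed

lemma orth_proj_mult_commutant_commutant:
  assumes x: "x \<in> commutant (commutant C)"
  shows "orth_proj C (x ** X) = x ** orth_proj C X"
proof -
  have "proj_coeff C j k \<in> commutant C" for j k
    using proj_coeff_commute unfolding commutant_def by blast
  then have x_comm: "proj_coeff C j k ** x = x ** proj_coeff C j k" for j k
    using x unfolding commutant_def by auto
  have "orth_proj C (x ** X) $ i $ j = (x ** orth_proj C X) $ i $ j" for i j
  proof -
    have "orth_proj C (x ** X) $ i $ j = (\<Sum>k\<in>UNIV. (x ** (proj_coeff C j k ** X)) $ i $ k)"
      by (simp add: orth_proj_component matrix_mul_assoc x_comm)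
    also have "\<dots> = (\<Sum>k\<in>UNIV. \<Sum>m\<in>UNIV. x$i$m * (proj_coeff C j k ** X) $ m $ k)"
      by (simp only: matrix_matrix_mult_def[of x] vec_lambda_beta)
    also have "\<dots> = (\<Sum>m\<in>UNIV. x$i$m * (\<Sum>k\<in>UNIV. (proj_coeff C j k ** X) $ m $ k))"
      by (subst sum.swap) (simp add: sum_distrib_left)
    also have "\<dots> = (x ** orth_proj C X) $ i $ j"
      by (simp add: orth_proj_component matrix_matrix_mult_def)
    finally show ?thesis .
  qed
  then show ?thesis by (simp add: vec_eq_iff)
qed

theorem commutant_commutant_eq: "commutant (commutant C) = C"
proof
  show "commutant (commutant C) \<subseteq> C"
  proof
    fix x assume x: "x \<in> commutant (commutant C)"
    have "x = x ** orth_proj C (mat 1)"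
      by (simp add: orth_proj_id[OF complex_star_subalg_subspace star_subalg_one])
    also have "\<dots> = orth_proj C x"
      using orth_proj_mult_commutant_commutant[OF x, of "mat 1"] by simp
    finally show "x \<in> C"
      using orth_proj_in[OF complex_star_subalg_subspace] by metis
  qed
  show "C \<subseteq> commutant (commutant C)"
    unfolding commutant_def by auto
qed

end

lemma commutant_antimono: "S \<subseteq> T \<Longrightarrow> commutant T \<subseteq> commutant S"
  unfolding commutant_def by auto

lemma complex_star_subalg_CliffD: "complex_star_subalg (CliffD D A)"
  unfolding CliffD_def complex_star_subalg_def by auto

theorem lemma12:
  fixes A B :: "(complex^'n::finite^'n) set" and D :: "complex^'n^'n"
    and J :: "complex^'n \<Rightarrow> complex^'n"
  assumes "real_spectral_triple A D J"
    and "complex_star_subalg B"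
    and "commutant B = opp J ` B"
    and "CliffD D A \<subseteq> B"
  shows "(commutant (CliffD D A) = opp J ` CliffD D A \<longleftrightarrow> commutant (CliffD D A) \<subseteq> opp J ` B)
       \<and> (commutant (CliffD D A) \<subseteq> opp J ` B \<longleftrightarrow> CliffD D A = B)"
proof -
  let ?C = "CliffD D A"
  have "?C = B \<longleftrightarrow> commutant ?C = commutant B"
    using commutant_commutant_eq[OF complex_star_subalg_CliffD]
      commutant_commutant_eq[OF assms(2)] by metis
  moreover have "commutant B \<subseteq> commutant ?C"
    using commutant_antimono[OF assms(4)] .
  ultimately have "commutant ?C \<subseteq> opp J ` B \<longleftrightarrow> ?C = B"
    using assms(3) by auto
  moreover have "commutant ?C = opp J ` ?C \<Longrightarrow> commutant ?C \<subseteq> opp J ` B"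
    using image_mono[OF assms(4)] by simp
  moreover have "?C = B \<Longrightarrow> commutant ?C = opp J ` ?C"
    using assms(3) by simp
  ultimately show ?thesis by blast
qed

end
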